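(* Let $\boldsymbol X \in \mathbb{R}^{n\times d}$, $\boldsymbol y \in \mathbb{R}^n$, $\boldsymbol M = \boldsymbol X^\top \boldsymbol X$, $\boldsymbol r = \boldsymbol X^\top \boldsymbol y$. Assume (A1) $\boldsymbol r > \mathbf 0$ and (A2) $M_{ij}\le 0$ for all $i\neq j$. Let $\boldsymbol C>\mathbf 0$, $\boldsymbol k>\mathbf 0$ in $\mathbb{R}^d$, and for $\varepsilon>0$ let $\boldsymbol\theta^{(\varepsilon)}(t)$ solve $$\frac{\mathrm d \theta_i}{\mathrm d t} = \theta_i\Big(r_i - \sum_{j=1}^d M_{ij}\theta_j\Big),\quad i=1,\dots,d,$$ with $\boldsymbol\theta^{(\varepsilon)}(0) = (C_1\varepsilon^{k_1},\dots,C_d\varepsilon^{k_d})$. Let $\boldsymbol\theta_\star = \boldsymbol M^{-1}\boldsymbol r$ (the minimizer of $f(\boldsymbol\theta)=\frac12\Vert\boldsymbol y - \boldsymbol X\boldsymbol\theta\Vert^2$), and for $\eta>0$ let $$\tau^{(\varepsilon)}_\eta = \inf\{ t\ge 0 : \Vert \boldsymbol\theta^{(\varepsilon)}(t) - \boldsymbol\theta_\star\Vert \le \eta\}.$$ Then for all $\eta>0$ small enough, $$\frac{\tau_\eta^{(\varepsilon)}}{\log\frac1\varepsilon}\xrightarrow[\varepsilon\to0]{} \max_{i\in\{1,\dots,d\}} \frac{(\boldsymbol M^{-1}\boldsymbol k)_i}{(\boldsymbol M^{-1}\boldsymbol r)_i}.$$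
   Context: Vector inequalities are coordinatewise; $\Vert\cdot\Vert$ is the Euclidean norm. Under (A1)–(A2), $\boldsymbol M$ is invertible. *)

theory Defs
  imports "HOL-Analysis.Analysis"
begin

definition lv_field :: "real^'d^'d \<Rightarrow> real^'d \<Rightarrow> real^'d \<Rightarrow> real^'d" where
  "lv_field M r th = (\<chi> i. th$i * (r$i - (\<Sum>j\<in>UNIV. M$i$j * th$j)))"

definition hit_time :: "(real \<Rightarrow> real^'d) \<Rightarrow> real^'d \<Rightarrow> real \<Rightarrow> real" where
  "hit_time th target eta = Inf {t. t \<ge> 0 \<and> norm (th t - target) \<le> eta}"

end

(*
  Under (A1) and (A2) the Gram matrix M is a nonsingular M-matrix: M x >= 0 forces x >= 0,
  so theta* = M^-1 r > 0 and m = M^-1 k > 0.  Along a trajectory all coordinates stay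
  positive and the log-coordinates u = M^-1 (ln theta) satisfy u' = theta* - theta.

  Lower bound: since theta >= 0, u_i grows at most like theta*_i t, while near theta* the
  vector u is bounded below.  As u(0) = M^-1 (ln C) - ln(1/eps) m, reaching the eta-ball
  takes at least ln(1/eps) max_i m_i / theta*_i - O(1).

  Upper bound: for T above that maximum, u stays above the affine curve
  -ln(1/eps) m - A theta* + t m / T up to time T ln(1/eps); there the Lyapunov function
  V(theta) = sum_i (theta_i - theta*_i ln theta_i) = sum_i theta_i - <r, u> is bounded
  independently of eps.  Since V decreases at rate at least c eta^2 outside the eta-ball,
  the ball is reached within a further O(1) time.
*)
theory Submission
  imports Defs
begin

lemma invertible_matrix_inv_cancel:
  fixes A :: "'a::semiring_1^'n^'n"
  assumes "invertible A"
  shows "A *v (matrix_inv A *v x) = x" and "matrix_inv A *v (A *v x) = x"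
proof -
  have "A ** matrix_inv A = mat 1 \<and> matrix_inv A ** A = mat 1"
    using assms unfolding invertible_def matrix_inv_def by (rule someI_ex)
  then show "A *v (matrix_inv A *v x) = x" and "matrix_inv A *v (A *v x) = x"
    by (simp_all add: matrix_vector_mul_assoc)
qed

lemma inner_gram_matrix:
  fixes X :: "real^'d^'n"
  shows "inner a ((transpose X ** X) *v b) = inner (X *v a) (X *v b)"
  by (metis dot_lmul_matrix inner_commute matrix_vector_mul_assoc transpose_matrix_vector)

lemma gram_matrix_symmetric:
  fixes X :: "real^'d^'n"
  shows "inner a ((transpose X ** X) *v b) = inner ((transpose X ** X) *v a) b"
  by (metis inner_commute inner_gram_matrix)

lemma Z_matrix_quadratic_form_abs_le:
  fixes M :: "real^'d^'d"
  assumes Z: "\<forall>i j. i \<noteq> j \<longrightarrow> M$i$j \<le> 0"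
  shows "inner (\<chi> i. \<bar>x$i\<bar>) (M *v (\<chi> i. \<bar>x$i\<bar>)) \<le> inner x (M *v x)"
proof -
  have "M$i$j * \<bar>x$i\<bar> * \<bar>x$j\<bar> \<le> M$i$j * x$i * x$j" for i j
  proof (cases "i = j")
    case False
    then have "M$i$j \<le> 0" using Z by auto
    moreover have "x$i * x$j \<le> \<bar>x$i\<bar> * \<bar>x$j\<bar>" by (metis abs_ge_self abs_mult)
    ultimately show ?thesis by (metis mult.assoc mult_left_mono_neg)
  qed simp
  then show ?thesis
    by (simp add: inner_vec_def matrix_vector_mult_def sum_distrib_left mult_ac sum_mono)
qed

lemma Z_matrix_inner_neg_pos_part:
  fixes M :: "real^'d^'d"
  assumes Z: "\<forall>i j. i \<noteq> j \<longrightarrow> M$i$j \<le> 0"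
  shows "inner (\<chi> i. max (- x$i) 0) (M *v (\<chi> i. max (x$i) 0)) \<le> 0"
proof -
  have "max (- x$i) 0 * (M$i$j * max (x$j) 0) \<le> 0" for i j
  proof (cases "i = j")
    case False
    then have "M$i$j \<le> 0" using Z by auto
    then show ?thesis by (simp add: mult_nonneg_nonpos mult_nonpos_nonneg)
  qed (simp add: max_def)
  then show ?thesis
    by (simp add: inner_vec_def matrix_vector_mult_def sum_distrib_left sum_nonpos)
qed

lemma Z_matrix_row_le_at_touching:
  fixes M :: "real^'d^'d"
  assumes Z: "\<forall>i j. i \<noteq> j \<longrightarrow> M$i$j \<le> 0"
    and touch: "x$i = z$i" and above: "\<forall>j. z$j \<le> x$j"
  shows "(M *v x)$i \<le> (M *v z)$i"
proof -
  have "M$i$j * x$j \<le> M$i$j * z$j" for j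
    using Z above touch by (cases "j = i") (auto intro: mult_left_mono_neg)
  then show ?thesis
    by (simp add: matrix_vector_mult_def sum_mono)
qed

lemma continuous_on_nonneg_if_pos_before:
  fixes f :: "real \<Rightarrow> real"
  assumes cont: "continuous_on {0..T} f" and t: "0 < t" "t \<le> T"
    and pos: "\<forall>s\<in>{0..<t}. 0 < f s"
  shows "0 \<le> f t"
proof (rule ccontr)
  assume "\<not> 0 \<le> f t"
  moreover have "t \<in> {0..T}"
    using t by simp
  ultimately obtain d where d: "0 < d" "\<forall>s\<in>{0..T}. dist s t < d \<longrightarrow> dist (f s) (f t) < - f t"
    using cont unfolding continuous_on_iff by (metis neg_0_less_iff_less not_le)
  define s where "s = max 0 (t - d/2)"
  have s: "s \<in> {0..<t}" "s \<in> {0..T}" "dist s t < d"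
    using t d by (auto simp: s_def dist_real_def)
  then have "dist (f s) (f t) < - f t"
    using d by blast
  then have "f s < 0"
    by (simp add: dist_real_def)
  with pos s(1) show False by fastforce
qed

lemma first_zero_barrier:
  fixes h :: "'i::finite \<Rightarrow> real \<Rightarrow> real"
  assumes cont: "\<And>i. continuous_on {0..T} (h i)"
    and initial: "\<And>i. 0 < h i 0"
    and exit_deriv: "\<And>i t. 0 < t \<Longrightarrow> t \<le> T \<Longrightarrow> \<forall>s\<in>{0..<t}. \<forall>j. 0 < h j s \<Longrightarrow>
      \<forall>j. 0 \<le> h j t \<Longrightarrow> h i t = 0 \<Longrightarrow> \<exists>D>0. (h i has_real_derivative D) (at t)"
  shows "\<forall>t\<in>{0..T}. \<forall>i. 0 < h i t"
proof (rule ccontr)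
  define S where "S = (\<Union>i. {0..T} \<inter> h i -` {..0})"
  assume "\<not> (\<forall>t\<in>{0..T}. \<forall>i. 0 < h i t)"
  then have S_ne: "S \<noteq> {}" by (auto simp: S_def not_less)
  have bdd: "bdd_below S"
    unfolding S_def by (rule bdd_belowI[of _ 0]) auto
  have "closed ({0..T} \<inter> h i -` {..0})" for i
    by (rule continuous_closed_preimage[OF cont]) auto
  then have "closed S"
    unfolding S_def by (intro closed_Union) auto
  then have "Inf S \<in> S"
    using S_ne bdd by (intro closed_contains_Inf)
  then obtain t0 i where t0: "t0 = Inf S" "t0 \<in> {0..T}" "h i t0 \<le> 0"
    unfolding S_def by auto
  have before: "\<forall>s\<in>{0..<t0}. \<forall>j. 0 < h j s"
  proof (intro ballI allI)
    fix s j assume s: "s \<in> {0..<t0}"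
    show "0 < h j s"
    proof (rule ccontr)
      assume "\<not> 0 < h j s"
      then have "s \<in> S" using s t0(2) by (auto simp: S_def not_less)
      then have "t0 \<le> s" unfolding t0(1) by (rule cInf_lower[OF _ bdd])
      with s show False by simp
    qed
  qed
  have t0_pos: "0 < t0"
    using t0 initial[of i] by (cases "t0 = 0") auto
  have at_t0: "0 \<le> h j t0" for j
    using continuous_on_nonneg_if_pos_before[OF cont t0_pos] t0(2) before by auto
  then have zero: "h i t0 = 0" using t0(3) by (meson antisym)
  then obtain D where D: "0 < D" "(h i has_real_derivative D) (at t0)"
    using exit_deriv[OF t0_pos _ before] t0(2) at_t0 by auto
  then obtain d where d: "0 < d" "\<forall>e>0. e < d \<longrightarrow> h i (t0 - e) < h i t0"
    using DERIV_pos_inc_left by blast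
  define e where "e = min d t0 / 2"
  have "0 < e" "e < d" "t0 - e \<in> {0..<t0}"
    using d t0_pos by (auto simp: e_def)
  then have "h i (t0 - e) < 0" "0 < h i (t0 - e)"
    using d zero before by auto
  then show False by linarith
qed

lemma filterlim_ln_inverse_at_right_0: "filterlim (\<lambda>x. ln (1 / x)) at_top (at_right (0::real))"
  unfolding inverse_eq_divide[symmetric] ln_inverse filterlim_uminus_at_top by (simp add: ln_at_0)

lemma tendsto_divide_by_linear_bounds:
  fixes f L :: "'a \<Rightarrow> real"
  assumes L: "filterlim L at_top F"
    and lower: "\<exists>c. \<forall>\<^sub>F x in F. a * L x - c \<le> f x"
    and upper: "\<forall>\<delta>>0. \<exists>c. \<forall>\<^sub>F x in F. f x \<le> (a + \<delta>) * L x + c"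
  shows "((\<lambda>x. f x / L x) \<longlongrightarrow> a) F"
proof (rule tendstoI)
  fix e :: real assume e: "0 < e"
  obtain c0 where c0: "\<forall>\<^sub>F x in F. a * L x - c0 \<le> f x"
    using lower by blast
  obtain c1 where c1: "\<forall>\<^sub>F x in F. f x \<le> (a + e / 2) * L x + c1"
    using upper e by (meson half_gt_zero)
  have "\<forall>\<^sub>F x in F. max 0 (max (c0 / e) (2 * c1 / e)) < L x"
    using L filterlim_at_top_dense by blast
  with c0 c1 show "\<forall>\<^sub>F x in F. dist (f x / L x) a < e"
  proof eventually_elim
    case (elim x)
    then have "0 < L x" "c0 < e * L x" "2 * c1 < e * L x"
      using e by (auto simp: field_simps)
    with elim have "(a - e) * L x < f x" "f x < (a + e) * L x"
      by (auto simp: algebra_simps)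
    with \<open>0 < L x\<close> show ?case
      by (simp add: dist_real_def abs_less_iff field_simps)
  qed
qed

lemma hit_time_le:
  assumes "0 \<le> t" "norm (th t - target) \<le> \<eta>"
  shows "hit_time th target \<eta> \<le> t"
  unfolding hit_time_def using assms by (intro cInf_lower bdd_belowI[of _ 0]) auto

lemma hit_time_ge:
  assumes "0 \<le> t" "norm (th t - target) \<le> \<eta>"
    and "\<And>s. 0 \<le> s \<Longrightarrow> norm (th s - target) \<le> \<eta> \<Longrightarrow> a \<le> s"
  shows "a \<le> hit_time th target \<eta>"
  unfolding hit_time_def using assms by (intro cInf_greatest) auto

definition vec_ln :: "real^'d \<Rightarrow> real^'d" where
  "vec_ln x = (\<chi> i. ln (x$i))"

locale lv_system =
  fixes X :: "real^'d^'n" and y :: "real^'n" and M :: "real^'d^'d" and r :: "real^'d"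
  assumes M_def: "M = transpose X ** X"
    and r_def: "r = transpose X *v y"
    and r_pos: "\<forall>i. 0 < r$i"
    and Z_matrix: "\<forall>i j. i \<noteq> j \<longrightarrow> M$i$j \<le> 0"
begin

abbreviation theta_star :: "real^'d" where
  "theta_star \<equiv> matrix_inv M *v r"

lemma quadratic_form_M: "inner a (M *v a) = (norm (X *v a))\<^sup>2"
  by (simp add: M_def inner_gram_matrix power2_norm_eq_inner)

lemma M_symmetric: "inner a (M *v b) = inner (M *v a) b"
  unfolding M_def by (rule gram_matrix_symmetric)

lemma M_injective:
  assumes "M *v x = 0"
  shows "x = 0"
proof -
  define a where "a = (\<chi> i. \<bar>x$i\<bar>)"
  \<comment> \<open>\<open>a\<close> lies in the kernel as well, which forces \<open>a = 0\<close> since \<open>\<langle>r, a\<rangle> = \<langle>y, X a\<rangle>\<close> and \<open>r > 0\<close>\<close>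
  have "inner a (M *v a) \<le> inner x (M *v x)"
    unfolding a_def by (rule Z_matrix_quadratic_form_abs_le[OF Z_matrix])
  then have "X *v a = 0"
    using assms by (simp add: quadratic_form_M)
  then have "inner r a = 0"
    by (simp add: r_def dot_lmul_matrix)
  then have "(\<Sum>i\<in>UNIV. r$i * \<bar>x$i\<bar>) = 0"
    by (simp add: a_def inner_vec_def)
  then have "\<forall>i\<in>UNIV. r$i * \<bar>x$i\<bar> = 0"
    using r_pos by (subst sum_nonneg_eq_0_iff[symmetric]) (auto simp: less_imp_le)
  then show "x = 0"
    using r_pos by (simp add: vec_eq_iff) (metis less_irrefl)
qed

lemma invertible_M: "invertible M"
  using M_injective by (simp add: invertible_left_inverse matrix_left_invertible_ker)

lemma M_inverse_cancel:
  "M *v (matrix_inv M *v x) = x" "matrix_inv M *v (M *v x) = x"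
  using invertible_matrix_inv_cancel[OF invertible_M] by auto

lemma M_theta_star: "M *v theta_star = r"
  by (rule M_inverse_cancel)

lemma nonneg_if_M_nonneg:
  assumes "\<forall>i. 0 \<le> (M *v x)$i"
  shows "0 \<le> x$i"
proof -
  define p where "p = (\<chi> i. max (x$i) 0)"
  define q where "q = (\<chi> i. max (- x$i) 0)"
  have x: "x = p - q" by (simp add: p_def q_def vec_eq_iff max_def)
  have "0 \<le> inner q (M *v x)"
    using assms by (simp add: q_def inner_vec_def sum_nonneg)
  also have "\<dots> = inner q (M *v p) - inner q (M *v q)"
    by (subst x) (simp add: matrix_vector_mult_diff_distrib inner_diff_right)
  also have "inner q (M *v p) \<le> 0"
    unfolding p_def q_def by (rule Z_matrix_inner_neg_pos_part[OF Z_matrix])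
  finally have "(norm (X *v q))\<^sup>2 \<le> 0"
    by (simp add: quadratic_form_M)
  then have "M *v q = 0"
    by (simp add: M_def flip: matrix_vector_mul_assoc)
  then have "q = 0" by (rule M_injective)
  then have "max (- x$i) 0 = 0"
    by (metis q_def vec_lambda_beta zero_index)
  then show ?thesis by linarith
qed

lemma pos_if_M_pos:
  assumes pos: "\<forall>i. 0 < (M *v x)$i"
  shows "0 < x$i"
proof (rule ccontr)
  have nonneg: "0 \<le> x$j" for j
    using pos by (intro nonneg_if_M_nonneg) (simp add: less_imp_le)
  assume "\<not> 0 < x$i"
  with nonneg have "x$i = 0" by (meson antisym not_le)
  then have "M$i$j * x$j \<le> 0" for j
    using Z_matrix nonneg[of j] by (cases "j = i") (auto simp: mult_nonpos_nonneg)
  then have "(M *v x)$i \<le> 0"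
    by (simp add: matrix_vector_mult_def sum_nonpos)
  with pos show False by (meson not_le)
qed

lemma theta_star_pos: "0 < theta_star$i"
  using pos_if_M_pos r_pos by (simp add: M_theta_star)

lemma M_coercive: "\<exists>c>0. \<forall>x. c * (norm x)\<^sup>2 \<le> inner x (M *v x)"
proof -
  have "X *v x = 0 \<Longrightarrow> x = 0" for x
    by (rule M_injective) (simp add: M_def flip: matrix_vector_mul_assoc)
  then obtain e where e: "0 < e" "\<And>x. e * norm x \<le> norm (X *v x)"
    using injective_imp_isometric[of UNIV "(*v) X"] by (auto simp: matrix_vector_mul_bounded_linear)
  have "e\<^sup>2 * (norm x)\<^sup>2 \<le> inner x (M *v x)" for x
    using power_mono[OF e(2)[of x]] e(1)
    by (simp add: quadratic_form_M power_mult_distrib)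
  with e(1) show ?thesis by (intro exI[of _ "e\<^sup>2"]) auto
qed

definition lyapunov :: "real^'d \<Rightarrow> real" where
  "lyapunov x = (\<Sum>i\<in>UNIV. x$i - theta_star$i * ln (x$i))"

lemma lyapunov_min:
  assumes "\<forall>i. 0 < x$i"
  shows "lyapunov theta_star \<le> lyapunov x"
  unfolding lyapunov_def
proof (rule sum_mono)
  fix i
  have t: "0 < theta_star$i" and x: "0 < x$i"
    using theta_star_pos assms by auto
  have "theta_star$i * ln (x$i / theta_star$i) \<le> theta_star$i * (x$i / theta_star$i - 1)"
    using t x by (intro mult_left_mono ln_le_minus_one) auto
  also have "\<dots> = x$i - theta_star$i"
    using t by (simp add: field_simps)
  finally show "theta_star$i - theta_star$i * ln (theta_star$i) \<le> x$i - theta_star$i * ln (x$i)"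
    using t x by (simp add: ln_div right_diff_distrib)
qed

lemma lyapunov_eq:
  "lyapunov x = (\<Sum>i\<in>UNIV. x$i) - inner r (matrix_inv M *v vec_ln x)"
proof -
  have "inner r (matrix_inv M *v vec_ln x) = inner (M *v theta_star) (matrix_inv M *v vec_ln x)"
    by (simp only: M_theta_star)
  also have "\<dots> = inner theta_star (vec_ln x)"
    by (subst M_symmetric[symmetric]) (simp only: M_inverse_cancel(1))
  finally show ?thesis
    by (simp add: lyapunov_def vec_ln_def inner_vec_def sum_subtractf)
qed

lemma lyapunov_le:
  assumes "\<forall>i. x$i \<le> \<beta> * theta_star$i"
    and "\<forall>i. - A * theta_star$i \<le> (matrix_inv M *v vec_ln x)$i"
  shows "lyapunov x \<le> \<beta> * (\<Sum>i\<in>UNIV. theta_star$i) + A * inner r theta_star"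
proof -
  have "(\<Sum>i\<in>UNIV. x$i) \<le> \<beta> * (\<Sum>i\<in>UNIV. theta_star$i)"
    using assms(1) by (simp add: sum_distrib_left sum_mono)
  moreover have "- A * inner r theta_star = (\<Sum>i\<in>UNIV. r$i * (- A * theta_star$i))"
    by (simp add: inner_vec_def sum_distrib_left mult_ac)
  moreover have "\<dots> \<le> (\<Sum>i\<in>UNIV. r$i * (matrix_inv M *v vec_ln x)$i)"
    using assms(2) r_pos by (intro sum_mono mult_left_mono) (auto simp: less_imp_le)
  ultimately show ?thesis
    unfolding lyapunov_eq inner_vec_def inner_real_def by linarith
qed

end

locale lv_trajectory = lv_system X y M r for X :: "real^'d^'n" and y M r +
  fixes th :: "real \<Rightarrow> real^'d"
  assumes ode: "\<And>t. 0 \<le> t \<Longrightarrow> (th has_vector_derivative lv_field M r (th t)) (at t within {0..})"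
    and initial_pos: "\<forall>i. 0 < th 0 $ i"
begin

lemma component_has_derivative:
  assumes "0 \<le> t"
  shows "((\<lambda>s. th s $ i) has_real_derivative th t $ i * (r$i - (M *v th t)$i)) (at t within {0..})"
proof -
  have field: "lv_field M r (th t) $ i = th t $ i * (r$i - (M *v th t)$i)"
    by (simp only: lv_field_def matrix_vector_mult_def vec_lambda_beta)
  have "((\<lambda>s. th s $ i) has_vector_derivative lv_field M r (th t) $ i) (at t within {0..})"
    by (rule bounded_linear.has_vector_derivative[OF bounded_linear_vec_nth ode[OF assms]])
  then show ?thesis
    unfolding has_real_derivative_iff_has_vector_derivative field .
qed

lemma component_has_derivative_at:
  assumes "0 < t"
  shows "((\<lambda>s. th s $ i) has_real_derivative th t $ i * (r$i - (M *v th t)$i)) (at t)"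
proof -
  have "((\<lambda>s. th s $ i) has_real_derivative th t $ i * (r$i - (M *v th t)$i)) (at t within {0<..})"
    using assms by (intro DERIV_subset[OF component_has_derivative]) auto
  moreover have "at t within {0<..} = at t"
    using assms by (intro at_within_open) auto
  ultimately show ?thesis by simp
qed

lemma continuous_on_th_component:
  assumes "S \<subseteq> {0..}"
  shows "continuous_on S (\<lambda>s. th s $ i)"
proof -
  have "continuous_on {0..} th"
    using has_vector_derivative_continuous[OF ode] by (simp add: continuous_on_eq_continuous_within)
  then show ?thesis
    by (rule continuous_on_component[OF continuous_on_subset[OF _ assms]])
qed

lemma th_pos:
  assumes "0 \<le> t"
  shows "0 < th t $ i"
proof (cases "t = 0")
  case False
  with assms have t: "0 < t" by simp
  define a where "a s = r$i - (M *v th s)$i" for s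
  have "continuous_on {0..t} a"
    unfolding a_def matrix_vector_mult_def vec_lambda_beta
    by (intro continuous_on_diff continuous_on_const continuous_on_sum
        continuous_on_mult[OF continuous_on_const continuous_on_th_component]) auto
  \<comment> \<open>integrating factor: \<open>g\<close> is constant\<close>
  define g where "g s = th s $ i * exp (- integral {0..s} a)" for s
  have g_deriv: "(g has_real_derivative 0) (at s within {0..t})" if s: "s \<in> {0..t}" for s
  proof -
    have "((\<lambda>s. th s $ i) has_real_derivative th s $ i * a s) (at s within {0..t})"
      unfolding a_def using s by (intro DERIV_subset[OF component_has_derivative]) auto
    moreover have "((\<lambda>x. exp (- integral {0..x} a)) has_real_derivative
        exp (- integral {0..s} a) * (- a s)) (at s within {0..t})"
      by (rule DERIV_chain2[OF DERIV_exp DERIV_minus[OF integral_has_real_derivative[OF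
            \<open>continuous_on {0..t} a\<close> s]]])
    ultimately show ?thesis
      unfolding g_def by (rule DERIV_mult'[THEN DERIV_cong]) (simp add: algebra_simps)
  qed
  have "g t = g 0"
  proof (rule DERIV_isconst_end[OF t DERIV_continuous_on[OF g_deriv]])
    fix s assume "0 < s" "s < t"
    then show "(g has_real_derivative 0) (at s)"
      using g_deriv[of s] by (simp add: at_within_Icc_at)
  qed
  then have "0 < th t $ i * exp (- integral {0..t} a)"
    using initial_pos by (simp add: g_def)
  then show ?thesis
    by (simp add: zero_less_mult_iff)
qed (use initial_pos in simp)

definition u :: "real \<Rightarrow> real^'d" where
  "u t = matrix_inv M *v vec_ln (th t)"

lemma u_component: "u t $ i = (\<Sum>j\<in>UNIV. matrix_inv M $ i $ j * ln (th t $ j))"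
  by (simp add: u_def vec_ln_def matrix_vector_mult_def)

lemma M_u: "M *v u t = vec_ln (th t)"
  unfolding u_def by (rule M_inverse_cancel)

lemma continuous_on_ln_component:
  assumes "S \<subseteq> {0..}"
  shows "continuous_on S (\<lambda>s. ln (th s $ i))"
proof -
  have "\<forall>s\<in>S. th s $ i \<noteq> 0"
    using assms th_pos by (metis atLeast_iff less_irrefl subsetD)
  then show ?thesis
    by (rule continuous_on_ln[OF continuous_on_th_component[OF assms]])
qed

lemma continuous_on_u:
  assumes "S \<subseteq> {0..}"
  shows "continuous_on S (\<lambda>s. u s $ i)"
  unfolding u_component
  by (intro continuous_on_sum continuous_on_mult[OF continuous_on_const]
      continuous_on_ln_component assms)

lemma ln_component_has_derivative:
  assumes "0 < t"
  shows "((\<lambda>s. ln (th s $ i)) has_real_derivative r$i - (M *v th t)$i) (at t)"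
proof -
  have pos: "0 < th t $ i" using th_pos assms by simp
  show ?thesis
    by (rule DERIV_chain2[OF DERIV_ln[OF pos] component_has_derivative_at[OF assms], THEN DERIV_cong])
      (use pos in simp)
qed

lemma u_has_derivative:
  assumes "0 < t"
  shows "((\<lambda>s. u s $ i) has_real_derivative theta_star$i - th t $ i) (at t)"
proof -
  have "((\<lambda>s. u s $ i) has_real_derivative
      (\<Sum>j\<in>UNIV. matrix_inv M $ i $ j * (r - M *v th t)$j)) (at t)"
    unfolding u_component vector_minus_component
    by (rule DERIV_sum, rule DERIV_cmult, rule ln_component_has_derivative[OF assms])
  moreover have "matrix_inv M *v (r - M *v th t) = theta_star - th t"
    by (simp add: matrix_vector_mult_diff_distrib M_inverse_cancel)
  then have "(\<Sum>j\<in>UNIV. matrix_inv M $ i $ j * (r - M *v th t)$j) = theta_star$i - th t $ i"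
    by (simp add: matrix_vector_mult_def vec_eq_iff)
  ultimately show ?thesis by simp
qed

lemma u_le_linear:
  assumes "0 \<le> t"
  shows "u t $ i \<le> u 0 $ i + theta_star$i * t"
proof -
  have "u t $ i - theta_star$i * t \<le> u 0 $ i - theta_star$i * 0"
  proof (rule DERIV_nonpos_imp_decreasing_open[OF assms, of "\<lambda>s. u s $ i - theta_star$i * s"])
    fix s :: real assume s: "0 < s" "s < t"
    have "((\<lambda>s. u s $ i - theta_star$i * s) has_real_derivative
        (theta_star$i - th s $ i) - theta_star$i * 1) (at s)"
      by (rule DERIV_diff[OF u_has_derivative[OF s(1)] DERIV_cmult[OF DERIV_ident]])
    then show "\<exists>y. ((\<lambda>s. u s $ i - theta_star$i * s) has_real_derivative y) (at s) \<and> y \<le> 0"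
      using th_pos[of s i] s by auto
  next
    show "continuous_on {0..t} (\<lambda>s. u s $ i - theta_star$i * s)"
      by (intro continuous_on_diff continuous_on_u continuous_on_mult_left continuous_on_id) auto
  qed
  then show ?thesis by simp
qed

lemma near_target_time_lower_bound:
  assumes eta: "\<forall>j. \<eta> \<le> theta_star$j / 2" and t: "0 \<le> t"
    and near: "norm (th t - theta_star) \<le> \<eta>"
  shows "(matrix_inv M *v vec_ln (\<chi> j. theta_star$j / 2))$i - u 0 $ i \<le> theta_star$i * t"
proof -
  define b where "b = matrix_inv M *v vec_ln (\<chi> j. theta_star$j / 2)"
  have "ln (theta_star$j / 2) \<le> ln (th t $ j)" for j
  proof -
    have "\<bar>th t $ j - theta_star$j\<bar> \<le> \<eta>"
      using component_le_norm_cart[of "th t - theta_star" j] near by simp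
    then have "theta_star$j / 2 \<le> th t $ j"
      using eta[rule_format, of j] unfolding abs_le_iff by linarith
    then show ?thesis
      using theta_star_pos[of j] by simp
  qed
  then have "0 \<le> (M *v (u t - b))$j" for j
    by (simp add: b_def M_u matrix_vector_mult_diff_distrib M_inverse_cancel vec_ln_def)
  then have "b$i \<le> u t $ i"
    using nonneg_if_M_nonneg[of "u t - b" i] by simp
  then show ?thesis
    using u_le_linear[OF t, of i] by (simp add: b_def)
qed

lemma th_below_scaled_target:
  assumes \<beta>: "1 < \<beta>" and initial: "\<forall>i. th 0 $ i < \<beta> * theta_star$i" and t: "0 \<le> t"
  shows "th t $ i < \<beta> * theta_star$i"
proof -
  have "\<forall>s\<in>{0..t}. \<forall>i. 0 < \<beta> * theta_star$i - th s $ i"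
  proof (rule first_zero_barrier)
    fix i
    show "continuous_on {0..t} (\<lambda>s. \<beta> * theta_star$i - th s $ i)"
      by (intro continuous_on_diff continuous_on_const continuous_on_th_component) auto
    show "0 < \<beta> * theta_star$i - th 0 $ i"
      using initial by simp
  next
    fix i s
    assume s: "0 < s" "s \<le> t" and below: "\<forall>j. 0 \<le> \<beta> * theta_star$j - th s $ j"
      and touch: "\<beta> * theta_star$i - th s $ i = 0"
    have "\<beta> * r$i = (M *v (\<beta> *\<^sub>R theta_star))$i"
      by (simp add: matrix_vector_mult_scaleR M_theta_star)
    also have "\<dots> \<le> (M *v th s)$i"
      using below touch by (intro Z_matrix_row_le_at_touching[OF Z_matrix]) auto
    finally have "r$i < (M *v th s)$i"
      using mult_strict_right_mono[OF \<beta> r_pos[rule_format, of i]] by simp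
    then have "0 < - (th s $ i * (r$i - (M *v th s)$i))"
      using th_pos[of s i] s by (simp add: mult_pos_neg)
    moreover have "((\<lambda>s. \<beta> * theta_star$i - th s $ i) has_real_derivative
        0 - th s $ i * (r$i - (M *v th s)$i)) (at s)"
      by (rule DERIV_diff[OF DERIV_const component_has_derivative_at[OF s(1)]])
    ultimately show "\<exists>D>0. ((\<lambda>s. \<beta> * theta_star$i - th s $ i) has_real_derivative D) (at s)"
      by (intro exI[of _ "0 - th s $ i * (r$i - (M *v th s)$i)"]) simp
  qed
  then show ?thesis using t by simp
qed

text \<open>At a first touching time the sign pattern of \<open>M\<close> gives \<open>ln th = M u \<le> M (a + s w)\<close>,
  so \<open>u\<close> outruns the affine curve \<open>a + s w\<close>.\<close>
lemma u_above_subsolution: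
  assumes initial: "\<forall>i. a$i < u 0 $ i"
    and sub: "\<forall>s\<in>{0..T}. \<forall>i. w$i < theta_star$i - exp ((M *v (a + s *\<^sub>R w))$i)"
  shows "\<forall>s\<in>{0..T}. \<forall>i. a$i + s * w$i < u s $ i"
proof -
  have "\<forall>s\<in>{0..T}. \<forall>i. 0 < u s $ i - (a$i + s * w$i)"
  proof (rule first_zero_barrier)
    fix i
    show "continuous_on {0..T} (\<lambda>s. u s $ i - (a$i + s * w$i))"
      by (intro continuous_on_diff continuous_on_add continuous_on_const continuous_on_u
          continuous_on_mult_right continuous_on_id) auto
    show "0 < u 0 $ i - (a$i + 0 * w$i)"
      using initial by simp
  next
    fix i s
    assume s: "0 < s" "s \<le> T" and above: "\<forall>j. 0 \<le> u s $ j - (a$j + s * w$j)"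
      and touch: "u s $ i - (a$i + s * w$i) = 0"
    have "ln (th s $ i) = (M *v u s)$i"
      by (simp add: M_u vec_ln_def)
    also have "\<dots> \<le> (M *v (a + s *\<^sub>R w))$i"
      using above touch by (intro Z_matrix_row_le_at_touching[OF Z_matrix]) auto
    finally have "exp (ln (th s $ i)) \<le> exp ((M *v (a + s *\<^sub>R w))$i)"
      by simp
    then have "th s $ i \<le> exp ((M *v (a + s *\<^sub>R w))$i)"
      using th_pos[of s i] s by simp
    moreover have "w$i < theta_star$i - exp ((M *v (a + s *\<^sub>R w))$i)"
      using sub s by simp
    ultimately have "0 < (theta_star$i - th s $ i) - (0 + 1 * w$i)"
      by linarith
    moreover have "((\<lambda>s. u s $ i - (a$i + s * w$i)) has_real_derivative
        (theta_star$i - th s $ i) - (0 + 1 * w$i)) (at s)"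
      by (rule DERIV_diff[OF u_has_derivative[OF s(1)] DERIV_add[OF DERIV_const
            DERIV_cmult_right[OF DERIV_ident]]])
    ultimately show "\<exists>D>0. ((\<lambda>s. u s $ i - (a$i + s * w$i)) has_real_derivative D) (at s)"
      by blast
  qed
  then show ?thesis by simp
qed

lemma u_linear_lower_bound:
  assumes T: "0 < T" and L: "0 \<le> L" and Mm: "\<forall>i. 0 \<le> (M *v m)$i"
    and A: "\<forall>i. exp (- A * r$i) < theta_star$i - m$i / T"
    and initial: "\<forall>i. - L * m$i - A * theta_star$i < u 0 $ i"
  shows "- A * theta_star$i < u (T * L) $ i"
proof -
  define a where "a = - (L *\<^sub>R m + A *\<^sub>R theta_star)"
  define w where "w = (1 / T) *\<^sub>R m"
  have "\<forall>s\<in>{0..T * L}. \<forall>i. w$i < theta_star$i - exp ((M *v (a + s *\<^sub>R w))$i)"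
  proof (intro ballI allI)
    fix s i assume s: "s \<in> {0..T * L}"
    have "M *v (a + s *\<^sub>R w) = (s / T - L) *\<^sub>R (M *v m) - A *\<^sub>R r"
      by (simp add: a_def w_def matrix_vector_right_distrib matrix_vector_mult_scaleR
          matrix_vector_mult_diff_distrib M_theta_star algebra_simps)
    moreover have "(s / T - L) * (M *v m)$i \<le> 0"
      using s T Mm by (intro mult_nonpos_nonneg) (auto simp: divide_le_eq mult.commute)
    ultimately have "exp ((M *v (a + s *\<^sub>R w))$i) \<le> exp (- A * r$i)"
      by simp
    moreover have "w$i = m$i / T"
      by (simp add: w_def)
    ultimately show "w$i < theta_star$i - exp ((M *v (a + s *\<^sub>R w))$i)"
      using A[rule_format, of i] by linarith
  qed
  moreover have "\<forall>i. a$i < u 0 $ i"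
    using initial by (simp add: a_def)
  ultimately have "a$i + (T * L) * w$i < u (T * L) $ i"
    using u_above_subsolution T L by simp
  then show ?thesis
    using T by (simp add: a_def w_def)
qed

lemma lyapunov_has_derivative:
  assumes "0 < t"
  shows "((\<lambda>s. lyapunov (th s)) has_real_derivative
    - inner (th t - theta_star) (M *v (th t - theta_star))) (at t)"
proof -
  have "((\<lambda>s. lyapunov (th s)) has_real_derivative
      (\<Sum>i\<in>UNIV. th t $ i * (r$i - (M *v th t)$i) - theta_star$i * (r$i - (M *v th t)$i))) (at t)"
    unfolding lyapunov_def
    by (rule DERIV_sum, rule DERIV_diff[OF component_has_derivative_at[OF assms]
          DERIV_cmult[OF ln_component_has_derivative[OF assms]]])
  moreover have "r - M *v th t = - (M *v (th t - theta_star))"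
    by (simp add: matrix_vector_mult_diff_distrib M_theta_star)
  then have "(\<Sum>i\<in>UNIV. th t $ i * (r$i - (M *v th t)$i) - theta_star$i * (r$i - (M *v th t)$i))
      = (\<Sum>i\<in>UNIV. - ((th t - theta_star)$i * (M *v (th t - theta_star))$i))"
    by (intro sum.cong) (auto simp: vec_eq_iff algebra_simps)
  ultimately show ?thesis
    by (simp add: inner_vec_def sum_negf)
qed

lemma lyapunov_decay_away_from_target:
  assumes c: "0 < c" "\<forall>x. c * (norm x)\<^sup>2 \<le> inner x (M *v x)"
    and \<eta>: "0 \<le> \<eta>" and T: "0 \<le> T1" "T1 \<le> T2"
    and far: "\<forall>s\<in>{T1..T2}. \<eta> \<le> norm (th s - theta_star)"
  shows "lyapunov (th T2) \<le> lyapunov (th T1) - c * \<eta>\<^sup>2 * (T2 - T1)"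
proof -
  have "lyapunov (th T2) + c * \<eta>\<^sup>2 * T2 \<le> lyapunov (th T1) + c * \<eta>\<^sup>2 * T1"
  proof (rule DERIV_nonpos_imp_decreasing_open[OF T(2), of "\<lambda>s. lyapunov (th s) + c * \<eta>\<^sup>2 * s"])
    fix s assume s: "T1 < s" "s < T2"
    let ?x = "th s - theta_star"
    have "c * \<eta>\<^sup>2 \<le> c * (norm ?x)\<^sup>2"
      using far s c(1) \<eta> by (intro mult_left_mono power_mono) auto
    also have "\<dots> \<le> inner ?x (M *v ?x)"
      using c(2) by blast
    finally have "- inner ?x (M *v ?x) + c * \<eta>\<^sup>2 * 1 \<le> 0" by simp
    moreover have "((\<lambda>s. lyapunov (th s) + c * \<eta>\<^sup>2 * s) has_real_derivative
        - inner ?x (M *v ?x) + c * \<eta>\<^sup>2 * 1) (at s)"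
      using s T by (intro DERIV_add[OF lyapunov_has_derivative DERIV_cmult[OF DERIV_ident]]) auto
    ultimately show "\<exists>y. ((\<lambda>s. lyapunov (th s) + c * \<eta>\<^sup>2 * s) has_real_derivative y) (at s) \<and> y \<le> 0"
      by blast
  next
    show "continuous_on {T1..T2} (\<lambda>s. lyapunov (th s) + c * \<eta>\<^sup>2 * s)"
      unfolding lyapunov_def using T
      by (intro continuous_on_add continuous_on_sum continuous_on_diff continuous_on_th_component
          continuous_on_mult[OF continuous_on_const] continuous_on_ln_component
          continuous_on_mult_left continuous_on_id) auto
  qed
  then show ?thesis
    by (simp add: algebra_simps)
qed

lemma exists_near_target:
  assumes c: "0 < c" "\<forall>x. c * (norm x)\<^sup>2 \<le> inner x (M *v x)"
    and \<eta>: "0 < \<eta>" and T: "0 \<le> T"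
    and gap: "lyapunov (th T) - lyapunov theta_star < c * \<eta>\<^sup>2 * D"
  shows "\<exists>s\<in>{T..T + D}. norm (th s - theta_star) \<le> \<eta>"
proof (rule ccontr)
  assume "\<not> ?thesis"
  then have far: "\<forall>s\<in>{T..T + D}. \<eta> \<le> norm (th s - theta_star)"
    by auto
  have lyapunov_min_th: "lyapunov theta_star \<le> lyapunov (th s)" if "0 \<le> s" for s
    using that th_pos by (intro lyapunov_min) auto
  then have "0 < c * \<eta>\<^sup>2 * D"
    using gap T by (metis diff_ge_0_iff_ge order_le_less_trans)
  moreover have "0 < c * \<eta>\<^sup>2"
    using c(1) \<eta> by simp
  ultimately have "0 < D"
    by (rule zero_less_mult_pos)
  then have "lyapunov (th (T + D)) \<le> lyapunov (th T) - c * \<eta>\<^sup>2 * (T + D - T)"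
    using c \<eta> T far by (intro lyapunov_decay_away_from_target) auto
  then have "lyapunov (th (T + D)) < lyapunov theta_star"
    using gap by simp
  moreover have "lyapunov theta_star \<le> lyapunov (th (T + D))"
    using \<open>0 < D\<close> T by (intro lyapunov_min_th) simp
  ultimately show False by simp
qed

end

locale lv_family = lv_system X y M r for X :: "real^'d^'n" and y M r +
  fixes C k :: "real^'d" and theta :: "real \<Rightarrow> real \<Rightarrow> real^'d"
  assumes C_pos: "\<forall>i. 0 < C$i" and k_pos: "\<forall>i. 0 < k$i"
    and ode: "\<And>eps t. 0 < eps \<Longrightarrow> 0 \<le> t \<Longrightarrow>
      (theta eps has_vector_derivative lv_field M r (theta eps t)) (at t within {0..})"
    and init: "\<And>eps. 0 < eps \<Longrightarrow> theta eps 0 = (\<chi> i. C$i * eps powr (k$i))"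
begin

abbreviation m :: "real^'d" where
  "m \<equiv> matrix_inv M *v k"

abbreviation rate :: real where
  "rate \<equiv> Max (range (\<lambda>i. m$i / theta_star$i))"

lemma trajectory: "0 < eps \<Longrightarrow> lv_trajectory X y M r (theta eps)"
  by (intro lv_trajectory.intro lv_system_axioms lv_trajectory_axioms.intro ode)
    (simp_all add: init C_pos)

lemma log_coords_initial:
  assumes "0 < eps"
  shows "matrix_inv M *v vec_ln (theta eps 0) = matrix_inv M *v vec_ln C - ln (1 / eps) *\<^sub>R m"
proof -
  have "C$i \<noteq> 0" for i
    using C_pos by (metis less_irrefl)
  with assms have "vec_ln (theta eps 0) = vec_ln C - ln (1 / eps) *\<^sub>R k"
    by (simp add: vec_ln_def init vec_eq_iff ln_mult ln_div)
  then show ?thesis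
    by (simp add: matrix_vector_mult_diff_distrib matrix_vector_mult_scaleR)
qed

lemma initial_le_C: "0 < eps \<Longrightarrow> eps < 1 \<Longrightarrow> theta eps 0 $ i \<le> C$i"
  using C_pos k_pos by (simp add: init mult_left_le powr_le1 less_imp_le)

lemma m_nonneg: "0 \<le> m$i"
  using k_pos by (intro nonneg_if_M_nonneg) (simp add: M_inverse_cancel less_imp_le)

lemma rate_ge: "m$i / theta_star$i \<le> rate"
  by (rule Max_ge) auto

lemma rate_nonneg: "0 \<le> rate"
  by (rule order_trans[OF divide_nonneg_pos[OF m_nonneg theta_star_pos] rate_ge])

lemma near_target_time_ge:
  assumes "\<forall>j. \<eta> \<le> theta_star$j / 2"
  obtains c where "\<And>eps t. 0 < eps \<Longrightarrow> 0 \<le> t \<Longrightarrow> norm (theta eps t - theta_star) \<le> \<eta> \<Longrightarrow>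
    rate * ln (1 / eps) - c \<le> t"
proof -
  have "rate \<in> range (\<lambda>i. m$i / theta_star$i)"
    by (rule Max_in) auto
  then obtain i where i: "rate = m$i / theta_star$i"
    by (rule rangeE)
  define b where "b = matrix_inv M *v vec_ln (\<chi> j. theta_star$j / 2)"
  define u0 where "u0 = matrix_inv M *v vec_ln C"
  show thesis
  proof (rule that[of "(u0$i - b$i) / theta_star$i"])
    fix eps t assume eps: "0 < eps" and t: "0 \<le> t" and near: "norm (theta eps t - theta_star) \<le> \<eta>"
    interpret tr: lv_trajectory X y M r "theta eps"
      by (rule trajectory[OF eps])
    have "b$i - tr.u 0 $ i \<le> theta_star$i * t"
      unfolding b_def by (rule tr.near_target_time_lower_bound[OF assms t near])
    moreover have "tr.u 0 = u0 - ln (1 / eps) *\<^sub>R m"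
      by (simp add: tr.u_def log_coords_initial[OF eps] u0_def)
    ultimately show "rate * ln (1 / eps) - (u0$i - b$i) / theta_star$i \<le> t"
      using theta_star_pos[of i] by (simp add: i field_simps)
  qed
qed

lemma subsolution_offset_exists:
  assumes T: "rate < T"
  obtains A where "\<forall>i. exp (- A * r$i) < theta_star$i - m$i / T"
    and "\<forall>i. - A * theta_star$i < (matrix_inv M *v vec_ln C)$i"
proof -
  define u0 where "u0 = matrix_inv M *v vec_ln C"
  have T_pos: "0 < T"
    using rate_nonneg T by linarith
  have gap: "0 < theta_star$i - m$i / T" for i
  proof -
    have "m$i / theta_star$i < T"
      using rate_ge[of i] T by linarith
    then have "m$i < T * theta_star$i"
      using theta_star_pos[of i] by (simp add: pos_divide_less_eq)
    then show ?thesis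
      using T_pos by (simp add: pos_divide_less_eq mult.commute)
  qed
  have "\<forall>\<^sub>F A in at_top. \<forall>i. exp (- A * r$i) < theta_star$i - m$i / T \<and> - A * theta_star$i < u0$i"
  proof (intro eventually_all_finite allI)
    fix i
    have "\<forall>\<^sub>F A in at_top. - ln (theta_star$i - m$i / T) / r$i < A \<and> - u0$i / theta_star$i < A"
      by (intro eventually_conj eventually_gt_at_top)
    then show "\<forall>\<^sub>F A in at_top. exp (- A * r$i) < theta_star$i - m$i / T \<and> - A * theta_star$i < u0$i"
    proof eventually_elim
      case (elim A)
      then have "- A * r$i < ln (theta_star$i - m$i / T)" "- A * theta_star$i < u0$i"
        using r_pos theta_star_pos[of i] by (auto simp: field_simps)
      then show ?case
        using gap[of i] by (metis exp_less_cancel_iff exp_ln)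
    qed
  qed
  then show thesis
    using that by (auto simp: eventually_at_top_linorder u0_def)
qed

lemma lyapunov_bounded_at_linear_time:
  assumes T: "rate < T"
  obtains K where "\<And>eps. 0 < eps \<Longrightarrow> eps < 1 \<Longrightarrow> lyapunov (theta eps (T * ln (1 / eps))) \<le> K"
proof -
  have T_pos: "0 < T"
    using rate_nonneg T by linarith
  obtain A where A: "\<forall>i. exp (- A * r$i) < theta_star$i - m$i / T"
    "\<forall>i. - A * theta_star$i < (matrix_inv M *v vec_ln C)$i"
    using subsolution_offset_exists[OF T] by blast
  have "\<forall>\<^sub>F \<beta> in at_top. \<forall>i. 1 < \<beta> \<and> C$i / theta_star$i < \<beta>"
    by (intro eventually_all_finite allI eventually_conj eventually_gt_at_top)
  then obtain \<beta> where \<beta>: "1 < \<beta>" "\<forall>i. C$i < \<beta> * theta_star$i"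
    using theta_star_pos by (auto simp: eventually_at_top_linorder pos_divide_less_eq)
  show thesis
  proof (rule that[of "\<beta> * (\<Sum>i\<in>UNIV. theta_star$i) + A * inner r theta_star"])
    fix eps :: real assume eps: "0 < eps" "eps < 1"
    define L where "L = ln (1 / eps)"
    have L: "0 \<le> L" using eps by (simp add: L_def)
    interpret tr: lv_trajectory X y M r "theta eps"
      by (rule trajectory[OF eps(1)])
    have "\<forall>i. - L * m$i - A * theta_star$i < tr.u 0 $ i"
      using A(2) by (simp add: tr.u_def log_coords_initial[OF eps(1)] L_def)
    then have "- A * theta_star$i \<le> (matrix_inv M *v vec_ln (theta eps (T * L)))$i" for i
      using tr.u_linear_lower_bound[OF T_pos L _ A(1)] k_pos
      by (simp add: M_inverse_cancel tr.u_def less_imp_le)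
    moreover have "theta eps (T * L) $ i \<le> \<beta> * theta_star$i" for i
      using tr.th_below_scaled_target[OF \<beta>(1)] initial_le_C[OF eps] \<beta>(2) T_pos L
      by (smt (verit) mult_nonneg_nonneg)
    ultimately show "lyapunov (theta eps (T * ln (1 / eps))) \<le> \<beta> * (\<Sum>i\<in>UNIV. theta_star$i) + A * inner r theta_star"
      unfolding L_def by (intro lyapunov_le) auto
  qed
qed

lemma near_target_time_le:
  assumes \<eta>: "0 < \<eta>" and \<delta>: "0 < \<delta>"
  obtains D where "\<And>eps. 0 < eps \<Longrightarrow> eps < 1 \<Longrightarrow>
    \<exists>t\<in>{0..(rate + \<delta>) * ln (1 / eps) + D}. norm (theta eps t - theta_star) \<le> \<eta>"
proof -
  obtain K where K: "\<And>eps. 0 < eps \<Longrightarrow> eps < 1 \<Longrightarrow> lyapunov (theta eps ((rate + \<delta>) * ln (1 / eps))) \<le> K"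
    using lyapunov_bounded_at_linear_time[of "rate + \<delta>"] \<delta> by auto
  obtain c where c: "0 < c" "\<forall>x. c * (norm x)\<^sup>2 \<le> inner x (M *v x)"
    using M_coercive by blast
  define D where "D = (K - lyapunov theta_star) / (c * \<eta>\<^sup>2) + 1"
  show thesis
  proof (rule that[of D])
    fix eps :: real assume eps: "0 < eps" "eps < 1"
    define T where "T = (rate + \<delta>) * ln (1 / eps)"
    have "0 \<le> ln (1 / eps)"
      using eps by simp
    then have T: "0 \<le> T"
      unfolding T_def using rate_nonneg \<delta> by simp
    interpret tr: lv_trajectory X y M r "theta eps"
      by (rule trajectory[OF eps(1)])
    have "c * \<eta>\<^sup>2 * D = K - lyapunov theta_star + c * \<eta>\<^sup>2"
      unfolding D_def using c(1) \<eta> by (simp add: field_simps)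
    moreover have "0 < c * \<eta>\<^sup>2"
      using c(1) \<eta> by simp
    ultimately have "lyapunov (theta eps T) - lyapunov theta_star < c * \<eta>\<^sup>2 * D"
      using K[OF eps] unfolding T_def by linarith
    then obtain s where "s \<in> {T..T + D}" "norm (theta eps s - theta_star) \<le> \<eta>"
      using tr.exists_near_target[OF c \<eta> T] by blast
    then show "\<exists>t\<in>{0..(rate + \<delta>) * ln (1 / eps) + D}. norm (theta eps t - theta_star) \<le> \<eta>"
      using T unfolding T_def by auto
  qed
qed

lemma hit_time_asymptotic_bounds:
  assumes \<eta>: "0 < \<eta>" "\<forall>j. \<eta> \<le> theta_star$j / 2"
  shows "\<exists>c. \<forall>\<^sub>F eps in at_right 0. rate * ln (1 / eps) - c \<le> hit_time (theta eps) theta_star \<eta>"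
    and "\<forall>\<delta>>0. \<exists>D. \<forall>\<^sub>F eps in at_right 0.
      hit_time (theta eps) theta_star \<eta> \<le> (rate + \<delta>) * ln (1 / eps) + D"
proof -
  have small: "\<forall>\<^sub>F eps in at_right 0. 0 < eps \<and> eps < (1::real)"
    by (auto simp: eventually_at_right_field intro!: exI[of _ 1])
  obtain c where c: "\<And>eps t. 0 < eps \<Longrightarrow> 0 \<le> t \<Longrightarrow> norm (theta eps t - theta_star) \<le> \<eta> \<Longrightarrow>
      rate * ln (1 / eps) - c \<le> t"
    using near_target_time_ge[OF \<eta>(2)] by blast
  obtain D1 where D1: "\<And>eps. 0 < eps \<Longrightarrow> eps < 1 \<Longrightarrow>
      \<exists>t\<in>{0..(rate + 1) * ln (1 / eps) + D1}. norm (theta eps t - theta_star) \<le> \<eta>"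
    using near_target_time_le[OF \<eta>(1) zero_less_one] by blast
  show "\<exists>c. \<forall>\<^sub>F eps in at_right 0. rate * ln (1 / eps) - c \<le> hit_time (theta eps) theta_star \<eta>"
  proof (intro exI[of _ c] eventually_mono[OF small])
    fix eps :: real assume eps: "0 < eps \<and> eps < 1"
    then obtain t where "t \<in> {0..(rate + 1) * ln (1 / eps) + D1}" "norm (theta eps t - theta_star) \<le> \<eta>"
      using D1 by blast
    then show "rate * ln (1 / eps) - c \<le> hit_time (theta eps) theta_star \<eta>"
      using c eps by (intro hit_time_ge) auto
  qed
  show "\<forall>\<delta>>0. \<exists>D. \<forall>\<^sub>F eps in at_right 0.
      hit_time (theta eps) theta_star \<eta> \<le> (rate + \<delta>) * ln (1 / eps) + D"
  proof (intro allI impI)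
    fix \<delta> :: real assume "0 < \<delta>"
    then obtain D where D: "\<And>eps. 0 < eps \<Longrightarrow> eps < 1 \<Longrightarrow>
        \<exists>t\<in>{0..(rate + \<delta>) * ln (1 / eps) + D}. norm (theta eps t - theta_star) \<le> \<eta>"
      using near_target_time_le[OF \<eta>(1)] by blast
    show "\<exists>D. \<forall>\<^sub>F eps in at_right 0. hit_time (theta eps) theta_star \<eta> \<le> (rate + \<delta>) * ln (1 / eps) + D"
    proof (intro exI[of _ D] eventually_mono[OF small])
      fix eps :: real assume "0 < eps \<and> eps < 1"
      then obtain t where "t \<in> {0..(rate + \<delta>) * ln (1 / eps) + D}" "norm (theta eps t - theta_star) \<le> \<eta>"
        using D by blast
      then show "hit_time (theta eps) theta_star \<eta> \<le> (rate + \<delta>) * ln (1 / eps) + D"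
        by (meson atLeastAtMost_iff hit_time_le order.trans)
    qed
  qed
qed

end

theorem corollary1:
  fixes X :: "real^'d^'n" and y :: "real^'n"
    and C k :: "real^'d"
    and theta :: "real \<Rightarrow> real \<Rightarrow> real^'d"
  defines "M \<equiv> transpose X ** X"
      and "r \<equiv> transpose X *v y"
  assumes A1: "\<forall>i. r$i > 0"
      and A2: "\<forall>i j. i \<noteq> j \<longrightarrow> M$i$j \<le> 0"
      and C_pos: "\<forall>i. C$i > 0"
      and k_pos: "\<forall>i. k$i > 0"
      and ode: "\<And>eps t. eps > 0 \<Longrightarrow> t \<ge> 0 \<Longrightarrow>
                  (theta eps has_vector_derivative lv_field M r (theta eps t)) (at t within {0..})"
      and init: "\<And>eps. eps > 0 \<Longrightarrow> theta eps 0 = (\<chi> i. C$i * eps powr (k$i))"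
  shows "\<exists>eta0>0. \<forall>eta. 0 < eta \<and> eta < eta0 \<longrightarrow>
           ((\<lambda>eps. hit_time (theta eps) (matrix_inv M *v r) eta / ln (1 / eps))
              \<longlongrightarrow> Max (range (\<lambda>i. (matrix_inv M *v k)$i / (matrix_inv M *v r)$i))) (at_right 0)"
proof -
  interpret lv_family X y M r C k theta
    using A1 A2 C_pos k_pos ode init by unfold_locales (simp_all add: M_def r_def)
  \<comment> \<open>inside the \<open>eta0\<close>-ball every coordinate is at least \<open>theta_star$i / 2\<close>\<close>
  define eta0 where "eta0 = Min (range (\<lambda>i. theta_star$i)) / 2"
  have "Min (range (\<lambda>i. theta_star$i)) \<in> range (\<lambda>i. theta_star$i)"
    by (rule Min_in) auto
  then have "0 < eta0"
    using theta_star_pos by (auto simp: eta0_def)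
  moreover have "((\<lambda>eps. hit_time (theta eps) theta_star eta / ln (1 / eps)) \<longlongrightarrow> rate) (at_right 0)"
    if eta: "0 < eta" "eta < eta0" for eta
  proof -
    have "Min (range (\<lambda>i. theta_star$i)) \<le> theta_star$j" for j
      by (rule Min_le) auto
    then have "\<forall>j. eta \<le> theta_star$j / 2"
      using eta by (auto simp: eta0_def less_imp_le)
    then show ?thesis
      using hit_time_asymptotic_bounds[OF eta(1)]
      by (intro tendsto_divide_by_linear_bounds[OF filterlim_ln_inverse_at_right_0]) auto
  qed
  ultimately show ?thesis by blast
qed

end
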